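(* Let $\Omega=[0,\sigma_I^{max}]$ with $\sigma_I^{max}>0$, let $g:[0,\infty)\to[0,\infty)$ be strictly increasing on $\Omega$ with $g(0)=0$, continuously differentiable on $\Omega$ with $g'(0)=0$. For constants $D_0\ge 0$, $D_1>0$ let $h(x)=g(D_0+D_1x)$. (1) Suppose $D_0+D_1x\in\Omega$ and $h(x)\in\Omega$ for all $x\in\Omega$. If there exists $\gamma<1$ such that $D_1\le\frac{\gamma}{\max_{x\in\Omega}g'(x)}$, then $h$ has exactly one fixed point $x_f$ in $\Omega$, and for every $x_0\in\Omega$ the iteration $x_{k+1}=h(x_k)$ satisfies $|x_k-x_f|\le\frac{\gamma^k}{1-\gamma}|x_0-x_f|$ for all $k\ge0$. (2) If there exists $x_1\in\Omega$ such that $\frac{1}{g'(x_1)}<D_1<\frac{x_1}{g(x_1)}$, then there exists $D_0\ge0$ such that $h(x)=g(D_0+D_1x)$ has more than one fixed point.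
   Context: Here $g$ models the channel decoder's output error probability as a function of the inverse input SINR, and $h$ is the iterative mapping of the decoder error probability across iterations; a fixed point of $h$ is an $x\ge0$ with $h(x)=x$. *)

theory Defs
  imports "HOL-Analysis.Analysis"
begin

definition hmap :: "(real \<Rightarrow> real) \<Rightarrow> real \<Rightarrow> real \<Rightarrow> real \<Rightarrow> real" where
  "hmap g D0 D1 x = g (D0 + D1 * x)"

end

theory Submission
  imports Defs
begin

text \<open>
  (1) By the mean value theorem and monotonicity of g, h is Lipschitz on \<Omega> with constant
  D1 * max g' \<le> \<gamma> < 1, so Banach's fixed point theorem applies on the complete interval \<Omega>,
  and the error contracts by the factor \<gamma> in each step.

  (2) For every u the choice D0 = u - D1 g(u) makes g(u) a fixed point of h, so it suffices to
  find v \<noteq> x1 with v - D1 g(v) = x1 - D1 g(x1).  The function \<phi>(u) = u - D1 g(u) satisfies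
  \<phi>(0) = 0 < \<phi>(x1), since D1 < x1 / g(x1), and \<phi>'(x1) = 1 - D1 g'(x1) < 0; hence \<phi> exceeds
  \<phi>(x1) slightly to the left of x1 and the intermediate value theorem provides v.
\<close>

lemma abs_diff_le_of_deriv_le:
  fixes f f' :: "real \<Rightarrow> real"
  assumes f_deriv: "\<forall>x\<in>{a..b}. (f has_real_derivative f' x) (at x within {a..b})"
    and f'_le: "\<forall>x\<in>{a..b}. f' x \<le> M"
    and f_mono: "mono_on {a..b} f"
    and x: "x \<in> {a..b}" and y: "y \<in> {a..b}"
  shows "\<bar>f x - f y\<bar> \<le> M * \<bar>x - y\<bar>"
proof -
  have ordered: "\<bar>f v - f u\<bar> \<le> M * \<bar>v - u\<bar>" if "u \<in> {a..b}" "v \<in> {a..b}" "u \<le> v" for u v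
  proof -
    have "\<exists>c\<in>{u..v}. f v - f u = f' c * (v - u)"
    proof (rule mvt_very_simple)
      fix z assume "u \<le> z" "z \<le> v"
      with that have "(f has_real_derivative f' z) (at z within {a..b})"
        using f_deriv by auto
      then have "(f has_real_derivative f' z) (at z within {u..v})"
        by (rule has_field_derivative_subset) (use that in auto)
      then show "(f has_derivative (*) (f' z)) (at z within {u..v})"
        by (simp add: has_field_derivative_def)
    qed fact
    then obtain c where c: "c \<in> {u..v}" "f v - f u = f' c * (v - u)" by blast
    have "f' c * (v - u) \<le> M * (v - u)"
      using c(1) that f'_le by (intro mult_right_mono) auto
    moreover have "f u \<le> f v"
      using f_mono that by (auto intro: mono_onD)
    ultimately show ?thesis using c(2) that(3) by simp
  qed
  show ?thesis
    using ordered[OF x y] ordered[OF y x] by (cases "x \<le> y") (auto simp: abs_minus_commute)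
qed

lemma hmap_dist_le:
  fixes g g' :: "real \<Rightarrow> real"
  assumes g_deriv: "\<forall>x\<in>{a..b}. (g has_real_derivative g' x) (at x within {a..b})"
    and g'_le: "\<forall>x\<in>{a..b}. g' x \<le> M"
    and g_mono: "mono_on {a..b} g"
    and D1: "D1 \<ge> 0"
    and x: "D0 + D1 * x \<in> {a..b}" and y: "D0 + D1 * y \<in> {a..b}"
  shows "dist (hmap g D0 D1 x) (hmap g D0 D1 y) \<le> D1 * M * dist x y"
proof -
  have "dist (hmap g D0 D1 x) (hmap g D0 D1 y) \<le> M * \<bar>(D0 + D1 * x) - (D0 + D1 * y)\<bar>"
    unfolding hmap_def dist_real_def by (rule abs_diff_le_of_deriv_le[OF g_deriv g'_le g_mono x y])
  also have "\<dots> = D1 * M * dist x y"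
    using D1 by (simp add: dist_real_def abs_mult flip: right_diff_distrib)
  finally show ?thesis .
qed

lemma contraction_iterate_dist_le:
  fixes f :: "'a::metric_space \<Rightarrow> 'a"
  assumes maps_to: "f ` S \<subseteq> S"
    and lipschitz: "\<And>x y. x \<in> S \<Longrightarrow> y \<in> S \<Longrightarrow> dist (f x) (f y) \<le> c * dist x y"
    and c: "0 \<le> c"
    and p: "p \<in> S" "f p = p"
    and x: "x \<in> S"
  shows "dist ((f ^^ k) x) p \<le> c ^ k * dist x p"
proof (induction k)
  case 0
  then show ?case by simp
next
  case (Suc k)
  have iterate_in: "(f ^^ k) x \<in> S"
    using maps_to x by (induction k) auto
  have "dist ((f ^^ Suc k) x) p = dist (f ((f ^^ k) x)) (f p)"
    using p by simp
  also have "\<dots> \<le> c * dist ((f ^^ k) x) p"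
    using lipschitz[OF iterate_in p(1)] .
  also have "\<dots> \<le> c * (c ^ k * dist x p)"
    using Suc.IH c by (rule mult_left_mono)
  finally show ?case by simp
qed

lemma hmap_contraction:
  fixes g g' :: "real \<Rightarrow> real"
  assumes g_deriv: "\<forall>x\<in>{a..b}. (g has_real_derivative g' x) (at x within {a..b})"
    and g'_le: "\<forall>x\<in>{a..b}. g' x \<le> M"
    and g_mono: "mono_on {a..b} g"
    and ab: "a \<le> b"
    and D1: "D1 \<ge> 0"
    and maps_to: "\<forall>x\<in>{a..b}. D0 + D1 * x \<in> {a..b} \<and> hmap g D0 D1 x \<in> {a..b}"
    and \<gamma>: "0 \<le> \<gamma>" "\<gamma> < 1" "D1 * M \<le> \<gamma>"
  shows "(\<exists>!xf. xf \<in> {a..b} \<and> hmap g D0 D1 xf = xf)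
    \<and> (\<forall>xf\<in>{a..b}. hmap g D0 D1 xf = xf \<longrightarrow>
         (\<forall>x0\<in>{a..b}. \<forall>k::nat.
            \<bar>(hmap g D0 D1 ^^ k) x0 - xf\<bar> \<le> \<gamma> ^ k / (1 - \<gamma>) * \<bar>x0 - xf\<bar>))"
proof -
  let ?h = "hmap g D0 D1"
  have h_maps_to: "?h ` {a..b} \<subseteq> {a..b}"
    using maps_to by blast
  have lipschitz: "dist (?h x) (?h y) \<le> \<gamma> * dist x y" if "x \<in> {a..b}" "y \<in> {a..b}" for x y
  proof -
    have "dist (?h x) (?h y) \<le> D1 * M * dist x y"
      using hmap_dist_le[OF g_deriv g'_le g_mono D1] maps_to that by blast
    also have "\<dots> \<le> \<gamma> * dist x y"
      using \<gamma>(3) by (rule mult_right_mono) simp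
    finally show ?thesis .
  qed
  have "\<exists>!xf\<in>{a..b}. ?h xf = xf"
    using ab \<gamma> by (intro Banach_fix[OF _ _ _ _ h_maps_to lipschitz]) (auto simp: complete_eq_closed)
  moreover have "\<bar>(?h ^^ k) x0 - xf\<bar> \<le> \<gamma> ^ k / (1 - \<gamma>) * \<bar>x0 - xf\<bar>"
    if xf: "xf \<in> {a..b}" "?h xf = xf" and x0: "x0 \<in> {a..b}" for xf x0 k
  proof -
    have "\<bar>(?h ^^ k) x0 - xf\<bar> \<le> \<gamma> ^ k * \<bar>x0 - xf\<bar>"
      using contraction_iterate_dist_le[OF h_maps_to lipschitz \<gamma>(1) xf x0]
      by (simp add: dist_real_def)
    also have "\<dots> \<le> \<gamma> ^ k / (1 - \<gamma>) * \<bar>x0 - xf\<bar>"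
      using \<gamma> by (intro mult_right_mono) (simp_all add: divide_simps mult_left_le)
    finally show ?thesis .
  qed
  ultimately show ?thesis by blast
qed

lemma hmap_contraction_SUP:
  fixes g g' :: "real \<Rightarrow> real"
  assumes \<sigma>: "\<sigma> > 0"
    and g_deriv: "\<forall>x\<in>{0..\<sigma>}. (g has_real_derivative g' x) (at x within {0..\<sigma>})"
    and g'_cont: "continuous_on {0..\<sigma>} g'"
    and g_mono: "strict_mono_on {0..\<sigma>} g"
    and D1: "D1 > 0"
    and maps_to: "\<forall>x\<in>{0..\<sigma>}. D0 + D1 * x \<in> {0..\<sigma>} \<and> hmap g D0 D1 x \<in> {0..\<sigma>}"
    and \<gamma>: "\<gamma> < 1" "D1 \<le> \<gamma> / (SUP x\<in>{0..\<sigma>}. g' x)"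
  shows "(\<exists>!xf. xf \<in> {0..\<sigma>} \<and> hmap g D0 D1 xf = xf)
    \<and> (\<forall>xf\<in>{0..\<sigma>}. hmap g D0 D1 xf = xf \<longrightarrow>
         (\<forall>x0\<in>{0..\<sigma>}. \<forall>k::nat.
            \<bar>(hmap g D0 D1 ^^ k) x0 - xf\<bar> \<le> \<gamma> ^ k / (1 - \<gamma>) * \<bar>x0 - xf\<bar>))"
proof -
  define M where "M = (SUP x\<in>{0..\<sigma>}. g' x)"
  have g'_le: "\<forall>x\<in>{0..\<sigma>}. g' x \<le> M"
    using compact_continuous_image[OF g'_cont compact_Icc]
    by (auto simp: M_def intro!: cSUP_upper bounded_imp_bdd_above compact_imp_bounded)
  have g_weak_mono: "mono_on {0..\<sigma>} g"
    using g_mono by (rule strict_mono_on_imp_mono_on)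
  have "0 < g \<sigma> - g 0"
    using strict_mono_onD[OF g_mono, of 0 \<sigma>] \<sigma> by simp
  also have "\<dots> \<le> M * \<sigma>"
    using abs_diff_le_of_deriv_le[OF g_deriv g'_le g_weak_mono, of \<sigma> 0] \<sigma> by simp
  \<comment> \<open>Clearing the denominator in the hypothesis on D1 needs M > 0.\<close>
  finally have M_pos: "M > 0"
    using \<sigma> by (simp add: zero_less_mult_iff)
  then have "D1 * M \<le> \<gamma>"
    using \<gamma>(2) by (simp add: M_def field_simps)
  moreover from this have "0 \<le> \<gamma>"
    using mult_pos_pos[OF D1 M_pos] by linarith
  ultimately show ?thesis
    using hmap_contraction[OF g_deriv g'_le g_weak_mono _ _ maps_to] \<sigma> D1 \<gamma>(1) by simp
qed

lemma exists_left_point_with_same_value: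
  fixes \<phi> :: "real \<Rightarrow> real"
  assumes ab: "a < b"
    and \<phi>_cont: "continuous_on {a..b} \<phi>"
    and \<phi>_le: "\<phi> a \<le> \<phi> b"
    and \<phi>_deriv: "(\<phi> has_real_derivative D) (at b within {a..b})"
    and D: "D < 0"
  shows "\<exists>v\<in>{a..<b}. \<phi> v = \<phi> b"
proof -
  obtain d where d: "d > 0" "\<And>e. e > 0 \<Longrightarrow> b - e \<in> {a..b} \<Longrightarrow> e < d \<Longrightarrow> \<phi> b < \<phi> (b - e)"
    using has_real_derivative_neg_dec_left[OF \<phi>_deriv D] by blast
  define t where "t = b - min (d / 2) ((b - a) / 2)"
  have t_between: "a < t" "t < b"
    unfolding t_def using ab d(1) by (simp_all add: min_def field_simps)
  then have t: "a < t" "t < b" "\<phi> b < \<phi> t"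
    unfolding t_def using d by (auto intro!: d(2))
  obtain v where "a \<le> v" "v \<le> t" "\<phi> v = \<phi> b"
    using IVT'[of \<phi> a "\<phi> b" t] \<phi>_le t continuous_on_subset[OF \<phi>_cont] by fastforce
  with t show ?thesis by auto
qed

lemma hmap_shift_fixed_point: "hmap g (u - D1 * g u) D1 (g u) = g u"
  by (simp add: hmap_def)

lemma hmap_two_fixed_points:
  fixes g g' :: "real \<Rightarrow> real"
  assumes g_deriv: "\<forall>x\<in>{0..b}. (g has_real_derivative g' x) (at x within {0..b})"
    and g_mono: "strict_mono_on {0..b} g"
    and g0: "g 0 = 0"
    and x1: "x1 \<in> {0..b}" "1 / g' x1 < D1" "D1 < x1 / g x1"
    and g'_x1: "g' x1 > 0"
    and D1: "D1 > 0"
  shows "\<exists>D0\<ge>0. \<exists>x y. x \<ge> 0 \<and> y \<ge> 0 \<and> x \<noteq> y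
            \<and> hmap g D0 D1 x = x \<and> hmap g D0 D1 y = y"
proof -
  define \<phi> where "\<phi> u = u - D1 * g u" for u
  have x1_pos: "x1 > 0"
    using x1 g0 D1 by (cases "x1 = 0") auto
  have g_x1: "g x1 > 0"
    using strict_mono_onD[OF g_mono, of 0 x1] x1 x1_pos g0 by auto
  have \<phi>_x1: "\<phi> 0 \<le> \<phi> x1" "\<phi> x1 \<ge> 0"
    using x1(3) g_x1 g0 by (simp_all add: \<phi>_def field_simps)
  have "\<forall>x\<in>{0..x1}. (g has_real_derivative g' x) (at x within {0..x1})"
    using g_deriv x1(1) by (auto intro: has_field_derivative_subset[of g _ _ "{0..b}"])
  then have "continuous_on {0..x1} \<phi>"
    unfolding \<phi>_def by (intro continuous_intros) (auto intro: DERIV_continuous_on)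
  moreover have "(\<phi> has_real_derivative 1 - D1 * g' x1) (at x1 within {0..x1})"
    unfolding \<phi>_def using \<open>\<forall>x\<in>{0..x1}. _\<close> x1_pos by (auto intro!: derivative_eq_intros)
  moreover have "1 - D1 * g' x1 < 0"
    using x1(2) g'_x1 by (simp add: field_simps)
  ultimately obtain v where v: "v \<in> {0..<x1}" "\<phi> v = \<phi> x1"
    using exists_left_point_with_same_value[OF x1_pos _ \<phi>_x1(1)] by blast
  have "0 \<le> g v" "g v < g x1"
    using strict_mono_on_leD[OF g_mono, of 0 v] strict_mono_onD[OF g_mono, of v x1] v x1 g0 by auto
  moreover have "hmap g (\<phi> x1) D1 (g v) = g v" "hmap g (\<phi> x1) D1 (g x1) = g x1"
    using hmap_shift_fixed_point[of g v D1] hmap_shift_fixed_point[of g x1 D1] v(2)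
    by (simp_all add: \<phi>_def)
  ultimately show ?thesis
    using \<phi>_x1(2) g_x1 by (intro exI[of _ "\<phi> x1"] conjI exI[of _ "g v"] exI[of _ "g x1"]) auto
qed

theorem propositionV1:
  fixes g g' :: "real \<Rightarrow> real" and \<sigma> D1 :: real
  assumes sigma_pos: "\<sigma> > 0"
    and g_nonneg: "\<forall>x\<ge>0. g x \<ge> 0"
    and g_mono: "strict_mono_on {0..\<sigma>} g"
    and g0: "g 0 = 0"
    and g_deriv: "\<forall>x\<in>{0..\<sigma>}. (g has_real_derivative g' x) (at x within {0..\<sigma>})"
    and g'_cont: "continuous_on {0..\<sigma>} g'"
    and g'0: "g' 0 = 0"
    and D1_pos: "D1 > 0"
  shows
    "(\<forall>D0 \<gamma>. D0 \<ge> 0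
        \<longrightarrow> (\<forall>x\<in>{0..\<sigma>}. D0 + D1 * x \<in> {0..\<sigma>} \<and> hmap g D0 D1 x \<in> {0..\<sigma>})
        \<longrightarrow> \<gamma> < 1
        \<longrightarrow> D1 \<le> \<gamma> / (SUP x\<in>{0..\<sigma>}. g' x)
        \<longrightarrow> (\<exists>!xf. xf \<in> {0..\<sigma>} \<and> hmap g D0 D1 xf = xf)
          \<and> (\<forall>xf\<in>{0..\<sigma>}. hmap g D0 D1 xf = xf \<longrightarrow>
               (\<forall>x0\<in>{0..\<sigma>}. \<forall>k::nat.
                  \<bar>(hmap g D0 D1 ^^ k) x0 - xf\<bar> \<le> \<gamma> ^ k / (1 - \<gamma>) * \<bar>x0 - xf\<bar>)))
     \<and> ((\<exists>x1\<in>{0..\<sigma>}. g' x1 > 0 \<and> 1 / g' x1 < D1 \<and> D1 < x1 / g x1)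
        \<longrightarrow> (\<exists>D0\<ge>0. \<exists>x y. x \<ge> 0 \<and> y \<ge> 0 \<and> x \<noteq> y
                \<and> hmap g D0 D1 x = x \<and> hmap g D0 D1 y = y))"
  apply (rule conjI; intro allI impI)
  subgoal by (rule hmap_contraction_SUP[OF sigma_pos g_deriv g'_cont g_mono D1_pos])
  subgoal by (elim bexE conjE) (rule hmap_two_fixed_points[OF g_deriv g_mono g0 _ _ _ _ D1_pos])
  done

end
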